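(* Let $\Psi\in\mathcal{E}_c\otimes\mathfrak{gl}(T)^1$ satisfy $\Psi s\in \mathrm{im}\,\partial^*=\mathcal{B}_1$ for all $s\in T$, and set $\tilde\nabla=\nabla+\Psi$. Then the BGG-splitting operator $\tilde L_0:\mathcal{H}_0\to T$ and the first BGG-operator $\tilde\Theta_0:\mathcal{H}_0\to\mathcal{H}_1$ constructed from $\tilde\nabla$ coincide with those constructed from $\nabla$, i.e. $\tilde L_0=L_0$ and $\tilde\Theta_0=\Theta_0$.
   Context: Conformal geometry $(M,[g])$ with standard tractor bundle $\mathcal{S}$; $T$ is a tractor bundle (a subbundle of a tensor power of $\mathcal{S}$) with its tractor connection $\nabla$, filtered by homogeneity. $\mathfrak{gl}(T)^1$ denotes the endomorphisms of $T$ homogeneous of degree $\geq 1$ with respect to this filtration. On the chain spaces $\mathcal{C}_k=\mathcal{E}_{[c_1\cdots c_k]}\otimes T$ there is the conformally invariant Kostant codifferential $\partial^*:\mathcal{C}_{k+1}\to\mathcal{C}_k$; set $\mathcal{Z}_k=\ker\partial^*\cap\mathcal{C}_k$, $\mathcal{B}_k=\mathrm{im}\,\partial^*\cap\mathcal{C}_k$, $\mathcal{H}_k=\mathcal{Z}_k/\mathcal{B}_k$ with projections $\Pi_k:\mathcal{Z}_k\to\mathcal{H}_k$. The BGG-construction works for $\nabla$ and for any connection $\nabla+\Psi$ with $\Psi\in\mathcal{E}_c\otimes\mathfrak{gl}(T)^1$: for each $\sigma\in\mathcal{H}_0$ there is a unique lift $s=L_0\sigma\in T$ with $\Pi_0 s=\sigma$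 and $\partial^*(\nabla s)=0$ (this defines the BGG-splitting operator $L_0$), and the first BGG-operator is $\Theta_0=\Pi_1\circ\nabla\circ L_0$; the operators $\tilde L_0,\tilde\Theta_0$ are defined in the same way using $\tilde\nabla$ in place of $\nabla$. *)

theory Defs
  imports Main "HOL.Real_Vector_Spaces"
begin

text \<open>C0 = sections of T, C1 = T-valued 1-forms, C2 = T-valued 2-forms (spaces of sections,
  modelled as real vector spaces). dstar1 : C1 -> C0 and dstar2 : C2 -> C1 are the
  Kostant codifferentials (on C0 the codifferential is zero, so Z0 = C0).\<close>

definition Pi0 :: "('c1 \<Rightarrow> 'c0::ab_group_add) \<Rightarrow> 'c0 \<Rightarrow> 'c0 set" where
  "Pi0 dstar1 s = {s + dstar1 c | c. True}"

definition H0 :: "('c1 \<Rightarrow> 'c0::ab_group_add) \<Rightarrow> 'c0 set set" where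
  "H0 dstar1 = range (Pi0 dstar1)"

definition Z1 :: "('c1 \<Rightarrow> 'c0::zero) \<Rightarrow> 'c1 set" where
  "Z1 dstar1 = {z. dstar1 z = 0}"

definition Pi1 :: "('c2 \<Rightarrow> 'c1::ab_group_add) \<Rightarrow> 'c1 \<Rightarrow> 'c1 set" where
  "Pi1 dstar2 z = {z + dstar2 c | c. True}"

definition H1 :: "('c1 \<Rightarrow> 'c0::zero) \<Rightarrow> ('c2 \<Rightarrow> 'c1::ab_group_add) \<Rightarrow> 'c1 set set" where
  "H1 dstar1 dstar2 = Pi1 dstar2 ` Z1 dstar1"

definition L0 :: "('c1 \<Rightarrow> 'c0::ab_group_add) \<Rightarrow> ('c0 \<Rightarrow> 'c1::zero) \<Rightarrow> 'c0 set \<Rightarrow> 'c0" where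
  "L0 dstar1 nabla sigma = (THE s. Pi0 dstar1 s = sigma \<and> dstar1 (nabla s) = 0)"

definition Theta0 :: "('c1 \<Rightarrow> 'c0::ab_group_add) \<Rightarrow> ('c2 \<Rightarrow> 'c1::ab_group_add)
    \<Rightarrow> ('c0 \<Rightarrow> 'c1) \<Rightarrow> 'c0 set \<Rightarrow> 'c1 set" where
  "Theta0 dstar1 dstar2 nabla sigma = Pi1 dstar2 (nabla (L0 dstar1 nabla sigma))"

definition BGG_works :: "('c1 \<Rightarrow> 'c0::ab_group_add) \<Rightarrow> ('c0 \<Rightarrow> 'c1::zero) \<Rightarrow> bool" where
  "BGG_works dstar1 D \<longleftrightarrow>
     (\<forall>sigma\<in>H0 dstar1. \<exists>!s. Pi0 dstar1 s = sigma \<and> dstar1 (D s) = 0)"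

end

theory Submission
  imports Defs
begin

text \<open>The lift condition of the splitting operator only sees the connection through
  \<open>\<partial>\<^sup>* \<circ> \<nabla>\<close>, and \<open>\<Pi>\<^sub>1\<close> only sees it modulo \<open>im \<partial>\<^sup>*\<close>. A deformation \<open>\<Psi>\<close> with values in
  \<open>\<B>\<^sub>1 = im \<partial>\<^sup>*\<close> changes neither: \<open>\<partial>\<^sup>* \<Psi> = 0\<close> because \<open>\<partial>\<^sup>* \<circ> \<partial>\<^sup>* = 0\<close>, and \<open>\<Pi>\<^sub>1\<close> is
  constant on cosets of \<open>im \<partial>\<^sup>*\<close>. Hence \<open>L\<^sub>0\<close> and \<open>\<Theta>\<^sub>0\<close> are unchanged, even without
  uniqueness of lifts or linearity of the connections.\<close>

lemma linear_imp_additive: "linear f \<Longrightarrow> additive f"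
  by (simp add: additive.intro linear_add)

lemma L0_cong_codiff:
  assumes "\<And>s. dstar1 (D' s) = dstar1 (D s)"
  shows "L0 dstar1 D' = L0 dstar1 D"
  unfolding L0_def by (simp add: assms)

lemma Theta0_cong:
  assumes "L0 dstar1 D' = L0 dstar1 D"
    and "\<And>s. Pi1 dstar2 (D' s) = Pi1 dstar2 (D s)"
  shows "Theta0 dstar1 dstar2 D' = Theta0 dstar1 dstar2 D"
  unfolding Theta0_def by (simp add: assms)

lemma (in additive) image_add_coset_eq:
  "{z + f c + f d | d. True} = {z + f d | d. True}"
proof (intro set_eqI iffI)
  fix x assume "x \<in> {z + f c + f d | d. True}"
  then obtain d where "x = z + f (c + d)" by (auto simp: add add.assoc)
  then show "x \<in> {z + f d | d. True}" by blast
next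
  fix x assume "x \<in> {z + f d | d. True}"
  then obtain d where "x = z + f c + f (d - c)" by (auto simp: diff)
  then show "x \<in> {z + f c + f d | d. True}" by blast
qed

lemma Pi1_add_boundary:
  assumes "additive dstar2"
  shows "Pi1 dstar2 (z + dstar2 c) = Pi1 dstar2 z"
  unfolding Pi1_def using additive.image_add_coset_eq [OF assms] .

lemma codiff_add_boundary:
  assumes "additive dstar1" and "\<And>c. dstar1 (dstar2 c) = 0"
  shows "dstar1 (x + dstar2 c) = dstar1 x"
  by (simp add: additive.add [OF assms(1)] assms(2))

lemma BGG_operators_add_boundary_valued:
  assumes "additive dstar1" and "additive dstar2"
    and "\<And>c. dstar1 (dstar2 c) = 0"
    and "\<And>s. Psi s \<in> range dstar2"
  shows "L0 dstar1 (\<lambda>s. D s + Psi s) = L0 dstar1 D"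
    and "Theta0 dstar1 dstar2 (\<lambda>s. D s + Psi s) = Theta0 dstar1 dstar2 D"
proof -
  have Psi: "\<exists>c. Psi s = dstar2 c" for s
    using assms(4) by blast
  show L0_eq: "L0 dstar1 (\<lambda>s. D s + Psi s) = L0 dstar1 D"
    using Psi by (intro L0_cong_codiff) (metis codiff_add_boundary assms(1,3))
  show "Theta0 dstar1 dstar2 (\<lambda>s. D s + Psi s) = Theta0 dstar1 dstar2 D"
    using Psi by (intro Theta0_cong L0_eq) (metis Pi1_add_boundary assms(2))
qed

theorem mainTheorem2:
  fixes dstar1 :: "'c1::real_vector \<Rightarrow> 'c0::real_vector"
    and dstar2 :: "'c2::real_vector \<Rightarrow> 'c1"
    and nabla :: "'c0 \<Rightarrow> 'c1"
    and Adm :: "('c0 \<Rightarrow> 'c1) set"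
    and Psi :: "'c0 \<Rightarrow> 'c1"
  assumes lin1: "linear dstar1"
    and lin2: "linear dstar2"
    and complex: "\<And>c. dstar1 (dstar2 c) = 0"
    and lin_nabla: "linear nabla"
    and adm_lin: "\<And>P. P \<in> Adm \<Longrightarrow> linear P"
    and bgg_nabla: "BGG_works dstar1 nabla"
    and bgg_adm: "\<And>P. P \<in> Adm \<Longrightarrow> BGG_works dstar1 (\<lambda>s. nabla s + P s)"
    and Psi_adm: "Psi \<in> Adm"
    and Psi_B1: "\<And>s. Psi s \<in> range dstar2"
  shows "(\<forall>sigma\<in>H0 dstar1.
            L0 dstar1 (\<lambda>s. nabla s + Psi s) sigma = L0 dstar1 nabla sigma)
       \<and> (\<forall>sigma\<in>H0 dstar1.
            Theta0 dstar1 dstar2 (\<lambda>s. nabla s + Psi s) sigma = Theta0 dstar1 dstar2 nabla sigma)"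
  using BGG_operators_add_boundary_valued [OF linear_imp_additive [OF lin1]
      linear_imp_additive [OF lin2] complex Psi_B1, of nabla]
  by simp

end
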